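(* Let $u\equiv 7,11\pmod{12}$. Then $\Phi(u\times 2,4,2)\le\left\lfloor\frac{u}{4}\left\lfloor\frac{2u-1}{3}\left\lfloor\frac{2u-2}{2}\right\rfloor\right\rfloor\right\rfloor-1$.
   Context: A 2-D $(u\times v,4,2)$-OOC is a family $\mathcal C$ of $u\times v$ $(0,1)$-matrices of Hamming weight $4$ such that for all $A=(a_{ij}),B=(b_{ij})\in\mathcal C$ and integers $r$ with $A\ne B$ or $r\not\equiv0\pmod v$, $\sum_{i,j}a_{ij}b_{i,j+r}\le 2$ (column indices mod $v$). $\Phi(u\times v,4,2)$ is the largest size of such a code. *)

theory Defs
  imports Complex_Main
begin

definition zo_matrices :: "nat \<Rightarrow> nat \<Rightarrow> (nat \<times> nat \<Rightarrow> nat) set" where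
  "zo_matrices u v = {A. (\<forall>i j. A (i, j) \<in> {0, 1}) \<and>
                          (\<forall>i j. \<not> (i < u \<and> j < v) \<longrightarrow> A (i, j) = 0)}"

definition hamming_weight :: "nat \<Rightarrow> nat \<Rightarrow> (nat \<times> nat \<Rightarrow> nat) \<Rightarrow> nat" where
  "hamming_weight u v A = (\<Sum>i<u. \<Sum>j<v. A (i, j))"

definition corr :: "nat \<Rightarrow> nat \<Rightarrow> (nat \<times> nat \<Rightarrow> nat) \<Rightarrow> (nat \<times> nat \<Rightarrow> nat) \<Rightarrow> int \<Rightarrow> nat" where
  "corr u v A B r = (\<Sum>i<u. \<Sum>j<v. A (i, j) * B (i, nat ((int j + r) mod int v)))"

definition is_2D_OOC :: "nat \<Rightarrow> nat \<Rightarrow> nat \<Rightarrow> nat \<Rightarrow> (nat \<times> nat \<Rightarrow> nat) set \<Rightarrow> bool" where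
  "is_2D_OOC u v w lam C \<longleftrightarrow>
     C \<subseteq> zo_matrices u v \<and> (\<forall>A\<in>C. hamming_weight u v A = w) \<and>
     (\<forall>A\<in>C. \<forall>B\<in>C. \<forall>r::int. (A \<noteq> B \<or> r mod int v \<noteq> 0) \<longrightarrow> corr u v A B r \<le> lam)"

definition Phi :: "nat \<Rightarrow> nat \<Rightarrow> nat \<Rightarrow> nat \<Rightarrow> nat" where
  "Phi u v w lam = Max {card C | C. is_2D_OOC u v w lam C}"

end

theory Submission
  imports Defs
begin

(* Each matrix of a (u x 2, 4, 2)-OOC, together with its cyclic column shift, gives two 4-subsets
   (blocks) of the 2u-point grid, and the correlation condition says exactly that any two blocks meet
   in at most two points: the blocks form a packing of triples. Count the uncovered triples (the
   leave): there are C(2u,3) - 8|C| of them, those through a point number C(2u-1,2) minus a multiple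
   of 3, and those through a pair {x, s x} swapped by the column shift s number 2u-2 minus a multiple
   of 4. For u = 7, 11 (mod 12) these are 4 (mod 8), 0 (mod 3) and 0 (mod 4) respectively, so a code
   beating the bound would leave exactly four triples, closed under s and with these divisibilities,
   which a short case analysis rules out. The nested floor in the statement equals C(2u,3)/8. *)

lemma card_supersets_of_card:
  assumes "finite X" "Q \<subseteq> X" "card Q \<le> k"
  shows "card {t. t \<subseteq> X \<and> card t = k \<and> Q \<subseteq> t} = (card X - card Q) choose (k - card Q)"
proof -
  have fQ: "finite Q" using assms finite_subset by blast
  have "bij_betw (\<lambda>s. s \<union> Q) {s. s \<subseteq> X - Q \<and> card s = k - card Q} {t. t \<subseteq> X \<and> card t = k \<and> Q \<subseteq> t}"
  proof (rule bij_betw_byWitness[where f' = "\<lambda>t. t - Q"])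
    show "(\<lambda>s. s \<union> Q) ` {s. s \<subseteq> X - Q \<and> card s = k - card Q} \<subseteq> {t. t \<subseteq> X \<and> card t = k \<and> Q \<subseteq> t}"
    proof (rule image_subsetI)
      fix s assume s: "s \<in> {s. s \<subseteq> X - Q \<and> card s = k - card Q}"
      then have "card (s \<union> Q) = card s + card Q"
        using assms(1) fQ by (intro card_Un_disjoint) (auto intro: finite_subset)
      with s assms show "s \<union> Q \<in> {t. t \<subseteq> X \<and> card t = k \<and> Q \<subseteq> t}" by auto
    qed
    show "(\<lambda>t. t - Q) ` {t. t \<subseteq> X \<and> card t = k \<and> Q \<subseteq> t} \<subseteq> {s. s \<subseteq> X - Q \<and> card s = k - card Q}"
      using fQ by (auto simp: card_Diff_subset)
  qed auto
  then have "card {t. t \<subseteq> X \<and> card t = k \<and> Q \<subseteq> t} = card {s. s \<subseteq> X - Q \<and> card s = k - card Q}"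
    by (simp add: bij_betw_same_card)
  also have "\<dots> = (card X - card Q) choose (k - card Q)"
    using assms fQ by (simp add: n_subsets card_Diff_subset)
  finally show ?thesis .
qed

lemma dvd_card_subset_eq:
  assumes "finite B" "A \<subseteq> B" "A \<noteq> {}" "card B \<le> n" "n dvd card A"
  shows "A = B"
proof -
  have "finite A" using assms(1,2) by (rule finite_subset[rotated])
  with assms(3) have "0 < card A" by (simp add: card_gt_0_iff)
  with assms(5) have "n \<le> card A" by (rule dvd_imp_le)
  with assms card_mono[of B A] show ?thesis by (intro card_subset_eq) auto
qed

lemma choose_two_mult: "2 * (n choose 2) = n * (n - 1)"
proof (induction n)
  case (Suc n)
  have "Suc n choose 2 = n + (n choose 2)"
    using binomial_Suc_Suc[of n 1] by (simp only: Suc_1 choose_one)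
  with Suc.IH show ?case by (cases n) (simp_all add: algebra_simps)
qed simp

lemma choose_three_mult: "6 * (n choose 3) = n * (n - 1) * (n - 2)"
proof (induction n)
  case (Suc n)
  have "Suc n choose 3 = (n choose 2) + (n choose 3)"
    using binomial_Suc_Suc[of n 2] by simp
  then have "6 * (Suc n choose 3) = 3 * (n * (n - 1)) + n * (n - 1) * (n - 2)"
    using choose_two_mult[of n] Suc.IH by simp
  also have "\<dots> = Suc n * (Suc n - 1) * (Suc n - 2)"
  proof (cases "n < 2")
    case False
    then obtain m where "n = Suc (Suc m)" by (metis add_2_eq_Suc le_add_diff_inverse not_less)
    then show ?thesis by (simp add: algebra_simps)
  qed (auto simp: less_2_cases_iff)
  finally show ?case .
qed simp

section \<open>Leaves of packings\<close>

definition packing_leave :: "'p set \<Rightarrow> nat \<Rightarrow> 'i set \<Rightarrow> ('i \<Rightarrow> 'p set) \<Rightarrow> 'p set set" where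
  "packing_leave G k I B = {t. t \<subseteq> G \<and> card t = k \<and> (\<forall>i\<in>I. \<not> t \<subseteq> B i)}"

lemma card_packing_leave_supersets:
  assumes fG: "finite G" and fI: "finite I"
    and blocks: "\<And>i. i \<in> I \<Longrightarrow> B i \<subseteq> G \<and> card (B i) = Suc k"
    and packing: "\<And>i j. i \<in> I \<Longrightarrow> j \<in> I \<Longrightarrow> i \<noteq> j \<Longrightarrow> card (B i \<inter> B j) < k"
    and Q: "Q \<subseteq> G" "card Q \<le> k"
  shows "card {t \<in> packing_leave G k I B. Q \<subseteq> t} + (Suc k - card Q) * card {i \<in> I. Q \<subseteq> B i}
         = (card G - card Q) choose (k - card Q)"
proof -
  define J where "J = {i \<in> I. Q \<subseteq> B i}"
  define S where "S i = {t. t \<subseteq> B i \<and> card t = k \<and> Q \<subseteq> t}" for i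
  have fB: "finite (B i)" if "i \<in> I" for i
    using blocks[OF that] fG by (auto intro: finite_subset)
  have supersets: "{t. t \<subseteq> G \<and> card t = k \<and> Q \<subseteq> t} = {t \<in> packing_leave G k I B. Q \<subseteq> t} \<union> (\<Union>i\<in>J. S i)"
  proof
    show "{t. t \<subseteq> G \<and> card t = k \<and> Q \<subseteq> t} \<subseteq> {t \<in> packing_leave G k I B. Q \<subseteq> t} \<union> (\<Union>i\<in>J. S i)"
      unfolding packing_leave_def J_def S_def by auto
    show "{t \<in> packing_leave G k I B. Q \<subseteq> t} \<union> (\<Union>i\<in>J. S i) \<subseteq> {t. t \<subseteq> G \<and> card t = k \<and> Q \<subseteq> t}"
      using blocks unfolding packing_leave_def J_def S_def by auto
  qed
  have card_S: "card (S i) = Suc k - card Q" if "i \<in> J" for i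
  proof -
    have "card (S i) = (Suc k - card Q) choose (k - card Q)"
      unfolding S_def using that Q(2) blocks fB by (simp add: J_def card_supersets_of_card)
    also have "\<dots> = Suc k - card Q" using Q(2) by (simp add: Suc_diff_le)
    finally show ?thesis .
  qed
  have "card (\<Union>i\<in>J. S i) = (\<Sum>i\<in>J. card (S i))"
  proof (rule card_UN_disjoint)
    show "finite J" using fI by (simp add: J_def)
    show "\<forall>i\<in>J. finite (S i)"
      using fB by (auto simp: J_def S_def intro: finite_subset[of _ "Pow (B _)"])
    show "\<forall>i\<in>J. \<forall>j\<in>J. i \<noteq> j \<longrightarrow> S i \<inter> S j = {}"
    proof (intro ballI impI equals0I)
      fix i j t assume ij: "i \<in> J" "j \<in> J" "i \<noteq> j" and t: "t \<in> S i \<inter> S j"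
      then have "card t \<le> card (B i \<inter> B j)"
        using fB by (intro card_mono) (auto simp: J_def S_def)
      with packing[of i j] ij t show False by (simp add: J_def S_def)
    qed
  qed
  also have "\<dots> = (Suc k - card Q) * card J" using card_S by simp
  finally have card_covered: "card (\<Union>i\<in>J. S i) = (Suc k - card Q) * card J" .
  have "(card G - card Q) choose (k - card Q) = card {t. t \<subseteq> G \<and> card t = k \<and> Q \<subseteq> t}"
    using card_supersets_of_card[OF fG Q] by simp
  also have "\<dots> = card {t \<in> packing_leave G k I B. Q \<subseteq> t} + card (\<Union>i\<in>J. S i)"
    unfolding supersets
  proof (rule card_Un_disjoint)
    have "finite {t. t \<subseteq> G \<and> card t = k \<and> Q \<subseteq> t}"
      by (rule finite_subset[of _ "Pow G"]) (use fG in auto)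
    then show "finite {t \<in> packing_leave G k I B. Q \<subseteq> t}" "finite (\<Union>i\<in>J. S i)"
      unfolding supersets by simp_all
    show "{t \<in> packing_leave G k I B. Q \<subseteq> t} \<inter> (\<Union>i\<in>J. S i) = {}"
      by (auto simp: packing_leave_def J_def S_def)
  qed
  finally show ?thesis using card_covered by (simp add: J_def)
qed

lemma no_balanced_four_triples:
  fixes L :: "'p set set" and \<sigma> :: "'p \<Rightarrow> 'p"
  assumes triples: "\<And>t. t \<in> L \<Longrightarrow> card t = 3"
    and invariant: "\<And>t. t \<in> L \<Longrightarrow> \<sigma> ` t \<in> L"
    and no_fixpoint: "\<And>x. x \<in> \<Union>L \<Longrightarrow> \<sigma> x \<noteq> x"
    and involution: "\<And>x. x \<in> \<Union>L \<Longrightarrow> \<sigma> (\<sigma> x) = x"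
    and point_dvd: "\<And>x. x \<in> \<Union>L \<Longrightarrow> 3 dvd card {t \<in> L. x \<in> t}"
    and pair_dvd: "\<And>x. x \<in> \<Union>L \<Longrightarrow> 4 dvd card {t \<in> L. {x, \<sigma> x} \<subseteq> t}"
  shows "card L \<noteq> 4"
proof
  assume card_L: "card L = 4"
  then have fin: "finite L" using card.infinite by fastforce
  obtain t where t: "t \<in> L" using card_L by fastforce
  have finite_member: "finite t'" if "t' \<in> L" for t'
    using triples[OF that] card.infinite by fastforce
  consider (pair) x where "x \<in> t" "\<sigma> x \<in> t" | (no_pair) "\<forall>x\<in>t. \<sigma> x \<notin> t" by blast
  then show False
  proof cases
    case pair
    \<comment> \<open>all four triples contain \<open>{x, \<sigma> x}\<close>, so a third point of \<open>t\<close> lies in \<open>t\<close> only\<close>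
    define Q where "Q = {x, \<sigma> x}"
    have "\<sigma> x \<noteq> x" using no_fixpoint pair t by blast
    then have card_Q: "card Q = 2" by (simp add: Q_def)
    have all_contain_Q: "{t' \<in> L. Q \<subseteq> t'} = L"
      using pair t pair_dvd[of x] card_L fin by (intro dvd_card_subset_eq) (auto simp: Q_def)
    have "\<not> t \<subseteq> Q"
    proof
      assume "t \<subseteq> Q"
      then have "card t \<le> card Q" by (intro card_mono) (simp_all add: Q_def)
      with card_Q triples[OF t] show False by simp
    qed
    then obtain z where z: "z \<in> t" "z \<notin> Q" by blast
    have "t' = insert z Q" if "t' \<in> L" "z \<in> t'" for t'
    proof (rule card_subset_eq[symmetric])
      show "insert z Q \<subseteq> t'" using all_contain_Q that by blast
      show "card (insert z Q) = card t'"
        using z card_Q triples[OF that(1)] by (simp add: Q_def)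
    qed (use finite_member that in blast)
    then have "{t' \<in> L. z \<in> t'} = {t}" using t z by blast
    moreover have "z \<in> \<Union>L" using t z by blast
    ultimately show False using point_dvd[of z] by simp
  next
    case no_pair
    \<comment> \<open>\<open>\<sigma> ` t\<close> is disjoint from \<open>t\<close>, so every point of \<open>t\<close> lies in all three other triples\<close>
    define s where "s = \<sigma> ` t"
    have s: "s \<in> L" using invariant[OF t] by (simp add: s_def)
    have not_in_s: "x \<notin> s" if "x \<in> t" for x
      using involution no_pair t that by (force simp: s_def)
    have card_rest: "card (L - {s}) = 3" using card_L s fin by simp
    have "{t' \<in> L. x \<in> t'} = L - {s}" if "x \<in> t" for x
      using not_in_s[OF that] t that point_dvd[of x] fin card_rest
      by (intro dvd_card_subset_eq) auto
    then have "t' = t" if "t' \<in> L - {s}" for t'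
      using that t triples finite_member by (intro card_subset_eq[symmetric]) auto
    then have "L - {s} \<subseteq> {t}" by blast
    with card_rest show False using card_mono[of "{t}" "L - {s}"] by simp
  qed
qed

section \<open>Codes as packings\<close>

lemma zo_matrix_values: "A \<in> zo_matrices u v \<Longrightarrow> A p = 0 \<or> A p = 1"
  unfolding zo_matrices_def by (cases p) auto

lemma finite_zo_matrices: "finite (zo_matrices u v)"
proof -
  let ?G = "{..<u} \<times> {..<v}"
  have "finite {A. \<forall>p. (p \<in> ?G \<longrightarrow> A p \<in> {0, 1}) \<and> (p \<notin> ?G \<longrightarrow> A p = 0)}"
    by (rule finite_set_of_finite_funs) simp_all
  moreover have "zo_matrices u v = {A. \<forall>p. (p \<in> ?G \<longrightarrow> A p \<in> {0, 1}) \<and> (p \<notin> ?G \<longrightarrow> A p = 0)}"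
    unfolding zo_matrices_def by auto
  ultimately show ?thesis by (simp only:)
qed

lemma finite_ooc: "is_2D_OOC u v w lam C \<Longrightarrow> finite C"
  unfolding is_2D_OOC_def using finite_zo_matrices by (blast intro: finite_subset)

lemma Phi_attained: "\<exists>C. is_2D_OOC u v w lam C \<and> Phi u v w lam = card C"
proof -
  let ?S = "{card C | C. is_2D_OOC u v w lam C}"
  have "?S \<subseteq> {..card (zo_matrices u v)}"
  proof
    fix n assume "n \<in> ?S"
    then obtain C where C: "is_2D_OOC u v w lam C" and n: "n = card C" by blast
    from C have "C \<subseteq> zo_matrices u v" by (simp add: is_2D_OOC_def)
    then show "n \<in> {..card (zo_matrices u v)}" by (simp add: n card_mono finite_zo_matrices)
  qed
  then have "finite ?S" by (rule finite_subset) simp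
  moreover have "is_2D_OOC u v w lam {}" by (simp add: is_2D_OOC_def)
  then have "?S \<noteq> {}" by blast
  ultimately have "Phi u v w lam \<in> ?S" unfolding Phi_def by (rule Max_in)
  then show ?thesis by blast
qed

lemma sum_grid_eq_card:
  fixes u v :: nat
  assumes "\<And>p. f p = 0 \<or> f p = 1"
  shows "(\<Sum>i<u. \<Sum>j<v. f (i, j)) = card {(i, j). i < u \<and> j < v \<and> f (i, j) = 1}"
proof -
  have "(\<Sum>i<u. \<Sum>j<v. f (i, j)) = (\<Sum>p\<in>{..<u} \<times> {..<v}. f p)"
    by (simp add: sum.cartesian_product)
  also have "\<dots> = (\<Sum>p\<in>{..<u} \<times> {..<v}. if p \<in> {p. f p = 1} then 1 else 0)"
    using assms by (intro sum.cong) auto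
  also have "\<dots> = (\<Sum>p\<in>{..<u} \<times> {..<v} \<inter> {p. f p = 1}. 1)"
    using sum.inter_restrict[where A = "{..<u} \<times> {..<v}" and B = "{p. f p = 1}" and g = "\<lambda>_. 1 :: nat"]
    by simp
  also have "{..<u} \<times> {..<v} \<inter> {p. f p = 1} = {(i, j). i < u \<and> j < v \<and> f (i, j) = 1}"
    by auto
  finally show ?thesis by simp
qed

lemma sum_shift_mod:
  fixes v b :: nat
  shows "(\<Sum>j<v. f ((j + b) mod v)) = (\<Sum>j<v. f j)"
proof -
  have "inj_on (\<lambda>j. (j + b) mod v) {..<v}"
  proof (rule inj_onI)
    fix x y assume "x \<in> {..<v}" "y \<in> {..<v}" "(x + b) mod v = (y + b) mod v"
    then have "(int x + int b) mod int v = (int y + int b) mod int v"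
      by (simp only: of_nat_add[symmetric] of_nat_mod[symmetric])
    then have "(int x + int b - int b) mod int v = (int y + int b - int b) mod int v"
      by (rule mod_diff_cong) simp
    with \<open>x \<in> {..<v}\<close> \<open>y \<in> {..<v}\<close> show "x = y" by simp
  qed
  moreover have "(\<lambda>j. (j + b) mod v) ` {..<v} = {..<v}"
    using calculation by (intro endo_inj_surj) auto
  ultimately show ?thesis by (intro sum.reindex_bij_betw) (simp add: bij_betw_def)
qed

definition shift_support :: "nat \<Rightarrow> nat \<Rightarrow> (nat \<times> nat \<Rightarrow> nat) \<Rightarrow> nat \<Rightarrow> (nat \<times> nat) set" where
  "shift_support u v A b = {(i, j). i < u \<and> j < v \<and> A (i, (j + b) mod v) = 1}"

lemma card_shift_support:
  assumes "A \<in> zo_matrices u v"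
  shows "card (shift_support u v A b) = hamming_weight u v A"
proof -
  have "card (shift_support u v A b) = (\<Sum>i<u. \<Sum>j<v. A (i, (j + b) mod v))"
    using sum_grid_eq_card[of "\<lambda>p. A (fst p, (snd p + b) mod v)"] zo_matrix_values[OF assms]
    by (simp add: shift_support_def)
  also have "\<dots> = hamming_weight u v A"
    unfolding hamming_weight_def by (simp add: sum_shift_mod[of "\<lambda>j. A (_, j)"])
  finally show ?thesis .
qed

lemma card_shift_support_inter:
  assumes "A \<in> zo_matrices u v" "A' \<in> zo_matrices u v"
  shows "card (shift_support u v A b \<inter> shift_support u v A' b') = corr u v A A' (int b' - int b)"
proof -
  let ?f = "\<lambda>p. A (fst p, (snd p + b) mod v) * A' (fst p, (snd p + b') mod v)"
  have "shift_support u v A b \<inter> shift_support u v A' b' = {(i, j). i < u \<and> j < v \<and> ?f (i, j) = 1}"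
    unfolding shift_support_def by auto
  moreover have "?f p = 0 \<or> ?f p = 1" for p
    using zo_matrix_values[OF assms(1), of "(fst p, (snd p + b) mod v)"]
      zo_matrix_values[OF assms(2), of "(fst p, (snd p + b') mod v)"] by auto
  ultimately have "card (shift_support u v A b \<inter> shift_support u v A' b') = (\<Sum>i<u. \<Sum>j<v. ?f (i, j))"
    using sum_grid_eq_card[of ?f] by simp
  also have "\<dots> = corr u v A A' (int b' - int b)"
    unfolding corr_def
  proof (rule sum.cong[OF refl])
    fix i
    have "nat ((int ((j + b) mod v) + (int b' - int b)) mod int v) = (j + b') mod v" for j
    proof -
      have "(int ((j + b) mod v) + (int b' - int b)) mod int v
          = ((int j + int b) mod int v + (int b' - int b)) mod int v"
        by (simp only: of_nat_mod of_nat_add)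
      also have "\<dots> = (int j + int b') mod int v"
        by (simp add: mod_add_left_eq)
      also have "\<dots> = int ((j + b') mod v)"
        by (simp only: of_nat_mod of_nat_add)
      finally show ?thesis by simp
    qed
    then show "(\<Sum>j<v. ?f (i, j)) = (\<Sum>j<v. A (i, j) * A' (i, nat ((int j + (int b' - int b)) mod int v)))"
      using sum_shift_mod[of "\<lambda>j. A (i, j) * A' (i, nat ((int j + (int b' - int b)) mod int v))" b v]
      by simp
  qed
  finally show ?thesis .
qed

lemma diff_mod_eq_0_iff_eq:
  assumes "b < v" "b' < v"
  shows "(int b' - int b) mod int v = 0 \<longleftrightarrow> b = b'"
proof
  assume "(int b' - int b) mod int v = 0"
  then have dvd: "int v dvd int b' - int b" by (simp add: mod_eq_0_iff_dvd)
  show "b = b'"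
  proof (rule ccontr)
    assume "b \<noteq> b'"
    then have "\<bar>int v\<bar> \<le> \<bar>int b' - int b\<bar>" using dvd by (intro dvd_imp_le_int) simp_all
    with assms show False by simp
  qed
qed simp

lemma ooc_shift_support_inter_le:
  assumes ooc: "is_2D_OOC u v w lam C"
    and "A \<in> C" "A' \<in> C" "b < v" "b' < v" "(A, b) \<noteq> (A', b')"
  shows "card (shift_support u v A b \<inter> shift_support u v A' b') \<le> lam"
proof -
  have zo: "A \<in> zo_matrices u v" "A' \<in> zo_matrices u v"
    using ooc assms(2,3) unfolding is_2D_OOC_def by blast+
  have distinct: "A \<noteq> A' \<or> (int b' - int b) mod int v \<noteq> 0"
  proof (cases "A = A'")
    case True
    with assms(6) have "b \<noteq> b'" by simp
    with diff_mod_eq_0_iff_eq[OF assms(4,5)] show ?thesis by simp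
  qed simp
  from ooc have "\<forall>A\<in>C. \<forall>B\<in>C. \<forall>r. A \<noteq> B \<or> r mod int v \<noteq> 0 \<longrightarrow> corr u v A B r \<le> lam"
    by (simp add: is_2D_OOC_def)
  from this[rule_format, OF assms(2,3) distinct] show ?thesis
    by (simp add: card_shift_support_inter[OF zo])
qed

text \<open>For two columns the cyclic shift is the swap of the columns; it is only used on the grid,
  where the truncated subtraction is harmless.\<close>

definition col_swap :: "nat \<times> nat \<Rightarrow> nat \<times> nat" where
  "col_swap p = (fst p, 1 - snd p)"

lemma col_swap_neq: "col_swap p \<noteq> p"
  by (cases p) (simp add: col_swap_def; presburger)

lemma col_swap_col_swap: "snd p < 2 \<Longrightarrow> col_swap (col_swap p) = p"
  by (cases p) (auto simp: col_swap_def)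

lemma col_swap_mem_shift_support:
  assumes "snd p < 2" "b < 2"
  shows "col_swap p \<in> shift_support u 2 A b \<longleftrightarrow> p \<in> shift_support u 2 A (1 - b)"
  using assms by (cases p) (auto simp: col_swap_def shift_support_def less_2_cases_iff)

lemma swap_pair_subset_shift_support_iff:
  assumes "snd x < 2" "b < 2"
  shows "{x, col_swap x} \<subseteq> shift_support u 2 A b \<longleftrightarrow> {x, col_swap x} \<subseteq> shift_support u 2 A (1 - b)"
proof -
  have "snd (col_swap x) < 2" by (simp add: col_swap_def)
  then have "x \<in> shift_support u 2 A b \<longleftrightarrow> col_swap x \<in> shift_support u 2 A (1 - b)"
    using col_swap_mem_shift_support[of "col_swap x" b u A] assms by (simp add: col_swap_col_swap)
  with col_swap_mem_shift_support[OF assms, of u A] show ?thesis by blast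
qed

definition ooc_leave :: "nat \<Rightarrow> (nat \<times> nat \<Rightarrow> nat) set \<Rightarrow> (nat \<times> nat) set set" where
  "ooc_leave u C = packing_leave ({..<u} \<times> {..<2}) 3 (C \<times> {..<2}) (\<lambda>(A, b). shift_support u 2 A b)"

lemma card_ooc_leave_supersets:
  assumes ooc: "is_2D_OOC u 2 4 2 C" and Q: "Q \<subseteq> {..<u} \<times> {..<2}" "card Q \<le> 3"
  shows "card {t \<in> ooc_leave u C. Q \<subseteq> t}
           + (4 - card Q) * card {(A, b) \<in> C \<times> {..<2}. Q \<subseteq> shift_support u 2 A b}
         = (2 * u - card Q) choose (3 - card Q)"
proof -
  have "card {t \<in> ooc_leave u C. Q \<subseteq> t}
          + (Suc 3 - card Q) * card {i \<in> C \<times> {..<2}. Q \<subseteq> (case i of (A, b) \<Rightarrow> shift_support u 2 A b)}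
        = (card ({..<u} \<times> {..<2::nat}) - card Q) choose (3 - card Q)"
    unfolding ooc_leave_def
  proof (rule card_packing_leave_supersets[OF _ _ _ _ Q])
    show "finite (C \<times> {..<2::nat})" using finite_ooc[OF ooc] by simp
    show "(case i of (A, b) \<Rightarrow> shift_support u 2 A b) \<subseteq> {..<u} \<times> {..<2}
          \<and> card (case i of (A, b) \<Rightarrow> shift_support u 2 A b) = Suc 3" if "i \<in> C \<times> {..<2}" for i
      using that ooc card_shift_support
      by (auto simp: shift_support_def is_2D_OOC_def)
    show "card ((case i of (A, b) \<Rightarrow> shift_support u 2 A b) \<inter> (case j of (A, b) \<Rightarrow> shift_support u 2 A b)) < 3"
      if "i \<in> C \<times> {..<2}" "j \<in> C \<times> {..<2}" "i \<noteq> j" for i j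
      using that ooc_shift_support_inter_le[OF ooc] by (fastforce simp: le_less_Suc_eq)
  qed simp
  moreover have "{i \<in> C \<times> {..<2}. Q \<subseteq> (case i of (A, b) \<Rightarrow> shift_support u 2 A b)}
      = {(A, b) \<in> C \<times> {..<2}. Q \<subseteq> shift_support u 2 A b}" by auto
  ultimately show ?thesis by (simp add: mult.commute)
qed

lemma col_swap_image_ooc_leave:
  assumes t: "t \<in> ooc_leave u C"
  shows "col_swap ` t \<in> ooc_leave u C"
proof -
  let ?B = "\<lambda>(A, b). shift_support u 2 A b"
  have "t \<subseteq> {..<u} \<times> {..<2} \<and> card t = 3 \<and> (\<forall>i\<in>C \<times> {..<2}. \<not> t \<subseteq> ?B i)"
    using t unfolding ooc_leave_def packing_leave_def by (rule CollectD)
  then have t_grid: "t \<subseteq> {..<u} \<times> {..<2}" and card_t: "card t = 3"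
    and uncovered: "\<forall>i\<in>C \<times> {..<2}. \<not> t \<subseteq> ?B i" by simp_all
  have swap_grid: "col_swap ` t \<subseteq> {..<u} \<times> {..<2}"
    using t_grid by (auto simp: col_swap_def)
  have "inj_on col_swap t"
  proof (rule inj_onI)
    fix x y assume "x \<in> t" "y \<in> t" "col_swap x = col_swap y"
    moreover have "snd x < 2" "snd y < 2" using t_grid \<open>x \<in> t\<close> \<open>y \<in> t\<close> by auto
    ultimately show "x = y" by (metis col_swap_col_swap)
  qed
  then have card_swap: "card (col_swap ` t) = 3" by (simp add: card_image card_t)
  have "\<forall>i\<in>C \<times> {..<2}. \<not> col_swap ` t \<subseteq> ?B i"
  proof (intro ballI notI)
    fix i assume "i \<in> C \<times> {..<2}" and swap_sub: "col_swap ` t \<subseteq> ?B i"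
    then obtain A b where i: "i = (A, b)" "A \<in> C" "b < 2" by blast
    have "t \<subseteq> ?B (A, 1 - b)"
    proof
      fix x assume "x \<in> t"
      then have "snd x < 2" "col_swap x \<in> shift_support u 2 A b"
        using t_grid swap_sub i(1) by auto
      then show "x \<in> ?B (A, 1 - b)" using col_swap_mem_shift_support[OF _ \<open>b < 2\<close>] by simp
    qed
    moreover have "(A, 1 - b) \<in> C \<times> {..<2}" using i by simp
    ultimately show False using uncovered by blast
  qed
  with swap_grid card_swap show ?thesis
    unfolding ooc_leave_def packing_leave_def by (intro CollectI conjI)
qed

lemma card_blocks_containing_swap_pair:
  assumes "finite C" "snd x < 2"
  shows "card {(A, b) \<in> C \<times> {..<2}. {x, col_swap x} \<subseteq> shift_support u 2 A b}
         = 2 * card {A \<in> C. {x, col_swap x} \<subseteq> shift_support u 2 A 0}"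
proof -
  have pair_iff: "{x, col_swap x} \<subseteq> shift_support u 2 A b \<longleftrightarrow> {x, col_swap x} \<subseteq> shift_support u 2 A 0"
    if "b < 2" for A b
    using swap_pair_subset_shift_support_iff[OF assms(2) that] that by (cases b) auto
  have "{(A, b) \<in> C \<times> {..<2}. {x, col_swap x} \<subseteq> shift_support u 2 A b}
             = {A \<in> C. {x, col_swap x} \<subseteq> shift_support u 2 A 0} \<times> {..<2}"
  proof (rule set_eqI)
    fix q :: "(nat \<times> nat \<Rightarrow> nat) \<times> nat"
    obtain A b where q: "q = (A, b)" by (cases q)
    show "q \<in> {(A, b) \<in> C \<times> {..<2}. {x, col_swap x} \<subseteq> shift_support u 2 A b}
          \<longleftrightarrow> q \<in> {A \<in> C. {x, col_swap x} \<subseteq> shift_support u 2 A 0} \<times> {..<2}"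
      unfolding q using pair_iff[of b A] by auto
  qed
  then show ?thesis using assms(1) by (simp add: card_cartesian_product)
qed

lemma choose_three_double_mod_8:
  fixes u :: nat
  assumes "u mod 4 = 3"
  shows "((2 * u) choose 3) mod 8 = 4"
proof -
  define k where "k = u div 4"
  define q where "q = u * (2 * u - 1) * (2 * k + 1)"
  have "2 * u - 2 = 4 * (2 * k + 1)" unfolding k_def using assms by presburger
  then have "6 * ((2 * u) choose 3) = 8 * q"
    using choose_three_mult[of "2 * u"] by (simp add: q_def algebra_simps)
  then have three: "3 * ((2 * u) choose 3) = 4 * q" by simp
  have "odd u" using assms by presburger
  then have "odd q" by (simp add: q_def odd_pos)
  then obtain r where "q = 2 * r + 1" by (rule oddE)
  with three have "3 * ((2 * u) choose 3) = 8 * r + 4" by simp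
  moreover have "c mod 8 = 4" if "3 * c = 8 * r + 4" for c :: nat
    using that by presburger
  ultimately show ?thesis by blast
qed

lemma choose_two_double_pred:
  fixes u :: nat
  shows "(2 * u - 1) choose 2 = (2 * u - 1) * (u - 1)"
  using choose_two_mult[of "2 * u - 1"] by (simp add: algebra_simps)

lemma three_dvd_double_pred_mult_pred:
  fixes u :: nat
  assumes "u mod 3 \<noteq> 0"
  shows "3 dvd (2 * u - 1) * (u - 1)"
proof -
  have "3 dvd 2 * u - 1 \<or> 3 dvd u - 1" using assms by presburger
  then show ?thesis by auto
qed

lemma johnson_bound_eq:
  fixes u :: nat
  assumes "u mod 3 \<noteq> 0"
  shows "real u / 4 * \<lfloor>(2 * real u - 1) / 3 * \<lfloor>(2 * real u - 2) / 2\<rfloor>\<rfloor> = real ((2 * u) choose 3) / 8"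
proof -
  define N where "N = (2 * u - 1) * (u - 1)"
  have u: "1 \<le> u" using assms by (cases u) auto
  have half: "(2 * real u - 2) / 2 = real (u - 1)" using u by (simp add: of_nat_diff)
  have "\<lfloor>(2 * real u - 2) / 2\<rfloor> = int (u - 1)" unfolding half by (rule floor_of_nat)
  moreover have "(2 * real u - 1) / 3 * real (u - 1) = real (N div 3)"
    using three_dvd_double_pred_mult_pred[OF assms] u
    by (simp add: N_def real_of_nat_div of_nat_diff)
  ultimately have "\<lfloor>(2 * real u - 1) / 3 * \<lfloor>(2 * real u - 2) / 2\<rfloor>\<rfloor> = int (N div 3)"
    by simp
  moreover have "6 * ((2 * u) choose 3) = 4 * u * N"
    using choose_three_mult[of "2 * u"] u by (simp add: N_def algebra_simps)
  then have "6 * real ((2 * u) choose 3) = 4 * real u * real N"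
    by (metis of_nat_mult of_nat_numeral)
  ultimately show ?thesis
    using three_dvd_double_pred_mult_pred[OF assms] by (simp add: N_def real_of_nat_div field_simps)
qed

lemma three_dvd_card_ooc_leave_through_point:
  assumes ooc: "is_2D_OOC u 2 4 2 C" and u3: "u mod 3 \<noteq> 0" and x: "x \<in> {..<u} \<times> {..<2}"
  shows "3 dvd card {t \<in> ooc_leave u C. x \<in> t}"
proof -
  have "card {t \<in> ooc_leave u C. x \<in> t}
          + 3 * card {(A, b) \<in> C \<times> {..<2}. {x} \<subseteq> shift_support u 2 A b} = (2 * u - 1) choose 2"
    using card_ooc_leave_supersets[OF ooc, of "{x}"] x by simp
  moreover have "3 dvd (2 * u - 1) choose 2"
    unfolding choose_two_double_pred using u3 by (rule three_dvd_double_pred_mult_pred)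
  moreover have "3 dvd a" if "a + 3 * b = n" "3 dvd n" for a b n :: nat
    using that by presburger
  ultimately show ?thesis by blast
qed

lemma four_dvd_card_ooc_leave_through_swap_pair:
  assumes ooc: "is_2D_OOC u 2 4 2 C" and u4: "u mod 4 = 3" and x: "x \<in> {..<u} \<times> {..<2}"
  shows "4 dvd card {t \<in> ooc_leave u C. {x, col_swap x} \<subseteq> t}"
proof -
  have x_snd: "snd x < 2" using x by auto
  have "col_swap x \<in> {..<u} \<times> {..<2}" using x by (auto simp: col_swap_def)
  moreover have "card {x, col_swap x} = 2" using col_swap_neq[of x] by auto
  ultimately have "card {t \<in> ooc_leave u C. {x, col_swap x} \<subseteq> t}
      + 2 * card {(A, b) \<in> C \<times> {..<2}. {x, col_swap x} \<subseteq> shift_support u 2 A b} = 2 * u - 2"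
    using card_ooc_leave_supersets[OF ooc, of "{x, col_swap x}"] x by simp
  moreover have "4 dvd a" if "a + 2 * (2 * m) = 2 * u - 2" for a m :: nat
    using that u4 by presburger
  ultimately show ?thesis
    unfolding card_blocks_containing_swap_pair[OF finite_ooc[OF ooc] x_snd] by blast
qed

lemma ooc_card_bound:
  assumes ooc: "is_2D_OOC u 2 4 2 C" and u4: "u mod 4 = 3" and u3: "u mod 3 \<noteq> 0"
  shows "8 * card C + 8 \<le> (2 * u) choose 3"
proof (rule ccontr)
  let ?L = "ooc_leave u C"
  have "card ?L + 4 * card {(A, b) \<in> C \<times> {..<2}. {} \<subseteq> shift_support u 2 A b} = (2 * u) choose 3"
    using card_ooc_leave_supersets[OF ooc, of "{}"] by simp
  then have card_L: "card ?L + 8 * card C = (2 * u) choose 3"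
    using finite_ooc[OF ooc] by (simp add: card_cartesian_product)
  have mod_8: "((2 * u) choose 3) mod 8 = 4" using u4 by (rule choose_three_double_mod_8)
  assume "\<not> 8 * card C + 8 \<le> (2 * u) choose 3"
  moreover have "l = 4" if "l + 8 * c = n" "n mod 8 = 4" "\<not> 8 * c + 8 \<le> n" for l c n :: nat
    using that by presburger
  ultimately have "card ?L = 4" using card_L mod_8 by blast
  moreover have "card ?L \<noteq> 4"
  proof (rule no_balanced_four_triples[where \<sigma> = col_swap])
    fix t assume "t \<in> ?L"
    then show "card t = 3" by (simp add: ooc_leave_def packing_leave_def)
    show "col_swap ` t \<in> ?L" using \<open>t \<in> ?L\<close> by (rule col_swap_image_ooc_leave)
  next
    fix x assume "x \<in> \<Union>?L"
    then have x: "x \<in> {..<u} \<times> {..<2}" by (auto simp: ooc_leave_def packing_leave_def)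
    show "col_swap x \<noteq> x" by (rule col_swap_neq)
    show "col_swap (col_swap x) = x" using x by (intro col_swap_col_swap) auto
    show "3 dvd card {t \<in> ?L. x \<in> t}"
      using ooc u3 x by (rule three_dvd_card_ooc_leave_through_point)
    show "4 dvd card {t \<in> ?L. {x, col_swap x} \<subseteq> t}"
      using ooc u4 x by (rule four_dvd_card_ooc_leave_through_swap_pair)
  qed
  ultimately show False by simp
qed

theorem lemma5p6:
  fixes u :: nat
  assumes "u mod 12 = 7 \<or> u mod 12 = 11"
  shows "int (Phi u 2 4 2) \<le>
    \<lfloor>real u / 4 * \<lfloor>(2 * real u - 1) / 3 * \<lfloor>(2 * real u - 2) / 2\<rfloor>\<rfloor>\<rfloor> - 1"
proof -
  have u4: "u mod 4 = 3" and u3: "u mod 3 \<noteq> 0" using assms by presburger+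
  obtain C where C: "is_2D_OOC u 2 4 2 C" and Phi: "Phi u 2 4 2 = card C"
    using Phi_attained by blast
  have "8 * (card C + 1) \<le> (2 * u) choose 3"
    using ooc_card_bound[OF C u4 u3] by simp
  then have "real (8 * (card C + 1)) \<le> real ((2 * u) choose 3)"
    by (simp only: of_nat_le_iff)
  then have "int (card C) + 1 \<le> \<lfloor>real ((2 * u) choose 3) / 8\<rfloor>"
    by (simp add: le_floor_iff)
  then show ?thesis unfolding Phi johnson_bound_eq[OF u3] by linarith
qed

end
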